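(* Let $M$ be a compact Riemannian manifold with Riemannian volume measure $\operatorname{Leb}$, let $f\colon M\to M$ be a $C^\infty$ map, and let $(U_n)_{n\ge1}$ be a concatenated collection (see context). If $$\sum_{n\ge1}\sum_{j=0}^{n-1}\operatorname{Leb}\big(f^j(u^{-1}(n))\big)<\infty,$$ then for $\operatorname{Leb}$-almost every $x\in M$, $$\sup\Big\{u(y)\colon y\in \bigcup_{n\ge1}U_n \text{ and } x\in C(y)\Big\}<\infty.$$
   Context: A collection $(U_n)_{n\ge1}$ of measurable subsets of $M$ whose union has full Lebesgue measure is called a concatenated collection if for all $n,m\ge1$: $x\in U_n$ and $f^n(x)\in U_m$ imply $x\in U_{n+m}$. For $x\in\bigcup_{n\ge1}U_n$, $u(x)$ is the minimum $n\in\mathbb N$ with $x\in U_n$, and $u^{-1}(n)=\{x\in\bigcup_k U_k\colon u(x)=n\}$. The chain generated by $x\in\bigcup_{n\ge1}U_n$ is $C(x)=\{x,f(x),\dots,f^{u(x)-1}(x)\}$. *)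

theory Defs
  imports "HOL-Probability.Probability"
begin

definition Ucup :: "(nat \<Rightarrow> 'a set) \<Rightarrow> 'a set" where
  "Ucup U = (\<Union>n\<in>{1..}. U n)"

definition concatenated :: "'a measure \<Rightarrow> ('a \<Rightarrow> 'a) \<Rightarrow> (nat \<Rightarrow> 'a set) \<Rightarrow> bool" where
  "concatenated M f U \<longleftrightarrow>
     (\<forall>n\<ge>1. U n \<in> sets M) \<and>
     emeasure M (space M - Ucup U) = 0 \<and>
     (\<forall>n m x. n \<ge> 1 \<longrightarrow> m \<ge> 1 \<longrightarrow> x \<in> U n \<longrightarrow> (f ^^ n) x \<in> U m \<longrightarrow> x \<in> U (n + m))"

text \<open>u(x) = min {n >= 1. x \<in> U_n} (meaningful for x in Ucup U).\<close>
definition u :: "(nat \<Rightarrow> 'a set) \<Rightarrow> 'a \<Rightarrow> nat" where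
  "u U x = (LEAST n. n \<ge> 1 \<and> x \<in> U n)"

definition uinv :: "(nat \<Rightarrow> 'a set) \<Rightarrow> nat \<Rightarrow> 'a set" where
  "uinv U n = {x \<in> Ucup U. u U x = n}"

definition chain :: "('a \<Rightarrow> 'a) \<Rightarrow> (nat \<Rightarrow> 'a set) \<Rightarrow> 'a \<Rightarrow> 'a set" where
  "chain f U x = {(f ^^ j) x | j. j < u U x}"

end

theory Submission
  imports Defs
begin

text \<open>
  A point x lies on a chain C(y) with u(y) = n exactly when x \<in> f^j(u^-1(n)) for some j < n.
  The hypothesis says that the measures of these sets are summable in n, so by Borel--Cantelli
  almost every x lies in only finitely many of them, which bounds u(y) over all chains through x.
\<close>

lemma borel_cantelli_AE_emeasure:
  assumes "\<And>n. A n \<in> sets M" and "(\<Sum>n. emeasure M (A n)) < \<infinity>"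
  shows "AE x in M. eventually (\<lambda>n. x \<notin> A n) sequentially"
proof -
  have finite: "emeasure M (A n) < \<infinity>" for n
    using assms(2) by (rule ennreal_suminf_lessD)
  have "emeasure M (A n) = ennreal (measure M (A n))" for n
    using finite[of n] by (simp add: emeasure_eq_ennreal_measure less_top)
  then have "(\<Sum>n. ennreal (measure M (A n))) \<noteq> top"
    using assms(2) by simp
  then have "summable (\<lambda>n. measure M (A n))"
    by (intro summable_suminf_not_top) auto
  then have "AE x in M. eventually (\<lambda>n. x \<in> space M - A n) sequentially"
    by (rule borel_cantelli_AE1[OF assms(1) finite])
  then show ?thesis
    by (rule AE_mp) (auto elim: eventually_mono)
qed

definition chain_points :: "('a \<Rightarrow> 'a) \<Rightarrow> (nat \<Rightarrow> 'a set) \<Rightarrow> nat \<Rightarrow> 'a set" where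
  "chain_points f U n = (\<Union>j<n. (f ^^ j) ` uinv U n)"

lemma sets_chain_points:
  assumes "\<And>j. j < n \<Longrightarrow> (f ^^ j) ` uinv U n \<in> sets M"
  shows "chain_points f U n \<in> sets M"
  unfolding chain_points_def using assms by (intro sets.finite_UN) auto

lemma emeasure_chain_points_le:
  assumes "\<And>j. j < n \<Longrightarrow> (f ^^ j) ` uinv U n \<in> sets M"
  shows "emeasure M (chain_points f U n) \<le> (\<Sum>j<n. emeasure M ((f ^^ j) ` uinv U n))"
  unfolding chain_points_def using assms by (intro emeasure_subadditive_finite) auto

lemma chain_subset_chain_points:
  assumes "y \<in> Ucup U"
  shows "chain f U y \<subseteq> chain_points f U (u U y)"
  using assms unfolding chain_def chain_points_def uinv_def by auto

lemma SUP_chain_length_le: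
  assumes "\<And>n. n \<ge> N \<Longrightarrow> x \<notin> chain_points f U n"
  shows "(SUP y \<in> {y \<in> Ucup U. x \<in> chain f U y}. enat (u U y)) \<le> enat N"
proof (rule SUP_least)
  fix y assume "y \<in> {y \<in> Ucup U. x \<in> chain f U y}"
  then have "x \<in> chain_points f U (u U y)"
    using chain_subset_chain_points[of y U f] by blast
  with assms show "enat (u U y) \<le> enat N"
    by (meson enat_ord_simps(1) nat_le_linear)
qed

theorem lemma1:
  fixes M :: "'a measure" and f :: "'a \<Rightarrow> 'a" and U :: "nat \<Rightarrow> 'a set"
  assumes "finite_measure M"
    and "f \<in> measurable M M"
    and "concatenated M f U"
    and "\<And>n j. j < n \<Longrightarrow> (f ^^ j) ` uinv U n \<in> sets M"
    and "(\<Sum>n. \<Sum>j<n. emeasure M ((f ^^ j) ` uinv U n)) < \<infinity>"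
  shows "AE x in M. (SUP y \<in> {y \<in> Ucup U. x \<in> chain f U y}. enat (u U y)) < \<infinity>"
proof -
  have "(\<Sum>n. emeasure M (chain_points f U n)) \<le> (\<Sum>n. \<Sum>j<n. emeasure M ((f ^^ j) ` uinv U n))"
    using assms(4) by (intro suminf_le emeasure_chain_points_le) auto
  then have "AE x in M. eventually (\<lambda>n. x \<notin> chain_points f U n) sequentially"
    using assms(4,5) by (intro borel_cantelli_AE_emeasure sets_chain_points) auto
  then show ?thesis
  proof (rule AE_mp, intro AE_I2 impI)
    fix x assume "eventually (\<lambda>n. x \<notin> chain_points f U n) sequentially"
    then obtain N where "\<And>n. n \<ge> N \<Longrightarrow> x \<notin> chain_points f U n"
      unfolding eventually_sequentially by blast
    then have "(SUP y \<in> {y \<in> Ucup U. x \<in> chain f U y}. enat (u U y)) \<le> enat N"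
      by (rule SUP_chain_length_le)
    then show "(SUP y \<in> {y \<in> Ucup U. x \<in> chain f U y}. enat (u U y)) < \<infinity>"
      using enat_ord_code(4) le_less_trans by blast
  qed
qed

end
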